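(* Let $t_1,t_2$ be terms and suppose $\Gamma\vdash t_1t_2:\tau$ for some context $\Gamma$ and type $\tau$. Then either $t_2=\{t_2'\}$ for some closed term $t_2'$, or there are types $\tau',\tau''$ and disjoint contexts $\Gamma_1,\Gamma_2$ such that $\Gamma_1\vdash t_1:\tau'$ and $\Gamma_2\vdash t_2:\tau''$.
   Context: Types: $\rho,\tau::=\Diamond\mid\mathbf{B}\mid\tau\multimap\rho\mid\tau\otimes\rho\mid\tau\times\rho\mid\mathbf{L}(\tau)$. Raw terms: $r,s,t::=x^\tau\mid c\mid\lambda x^\tau.\,t\mid\langle t,s\rangle\mid ts\mid\{t\}$, where each variable $x^\tau$ carries a type (infinitely many variables of each type), application associates to the left, terms are identified up to renaming of bound variables ($\lambda$ is the only binder), and the constants $c$ with their types are $\mathsf{tt},\mathsf{ff}:\mathbf{B}$; $\mathsf{nil}_\tau:\mathbf{L}(\tau)$; $\mathsf{cons}_\tau:\Diamond\multimap\tau\multimap\mathbf{L}(\tau)\multimap\mathbf{L}(\tau)$; $\otimes_{\tau,\rho}:\tau\multimap\rho\multimap\tau\otimes\rho$. A context is a finite set of typed variables; $\Gamma_1,\Gamma_2$ denotes $\Gamma_1\cup\Gamma_2$ and presupposes $\Gamma_1\cap\Gamma_2=\emptyset$; $x^\tau$ also denotes $\{x^\tau\}$. The relation $\Gamma\vdash t:\tau$ is inductively defined by: (Var) $\Gamma,x^\tau\vdash x:\tau$; (Const) $\Gamma\vdash c:\tau$ for a constant $c$ of type $\tau$; ($\multimap^+$) from $\Gamma\cup\{x^\tau\}\vdash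 t:\rho$ infer $\Gamma\vdash\lambda x^\tau.t:\tau\multimap\rho$; ($\multimap^-$) from $\Gamma_1\vdash t:\tau\multimap\rho$ and $\Gamma_2\vdash s:\tau$ infer $\Gamma_1,\Gamma_2\vdash ts:\rho$; ($\times^+$) from $\Gamma\vdash t:\tau$ and $\Gamma\vdash s:\rho$ infer $\Gamma\vdash\langle t,s\rangle:\tau\times\rho$; ($\times^-_1$) from $\Gamma\vdash t:\tau\times\rho$ infer $\Gamma\vdash t\,\mathsf{tt}:\tau$; ($\times^-_0$) from $\Gamma\vdash t:\tau\times\rho$ infer $\Gamma\vdash t\,\mathsf{ff}:\rho$; ($\mathbf{B}^-$) from $\Gamma_1\vdash t:\mathbf{B}$, $\Gamma_2\vdash s:\tau$, $\Gamma_2\vdash r:\tau$ infer $\Gamma_1,\Gamma_2\vdash t\langle s,r\rangle:\tau$; ($\otimes^-$) from $\Gamma_1\vdash t:\tau\otimes\rho$ and $\Gamma_2,x^\tau,y^\rho\vdash s:\sigma$ infer $\Gamma_1,\Gamma_2\vdash t(\lambda x^\tau.\lambda y^\rho.s):\sigma$; ($\mathbf{L}^-$) from $\Gamma\vdash t:\mathbf{L}(\tau)$ and $\emptyset\vdash s:\Diamond\multimap\tau\multimap\rho\multimap\rho$ infer $\Gamma\vdash t\{s\}:\rho\multimap\rho$. A term is closed if it has no free variables. *)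

theory Defs
  imports Main
begin

datatype ty = Dia | Bool | Fun ty ty | Tens ty ty | Prod ty ty | Lst ty

datatype const = TT | FF | NilC ty | ConsC ty | TensC ty ty

type_synonym var = "nat \<times> ty"

datatype trm = V nat ty | C const | Lam nat ty trm | Pr trm trm | App trm trm | Br trm

fun ctype :: "const \<Rightarrow> ty" where
  "ctype TT = Bool"
| "ctype FF = Bool"
| "ctype (NilC t) = Lst t"
| "ctype (ConsC t) = Fun Dia (Fun t (Fun (Lst t) (Lst t)))"
| "ctype (TensC t r) = Fun t (Fun r (Tens t r))"

fun fv :: "trm \<Rightarrow> var set" where
  "fv (V x t) = {(x, t)}"
| "fv (C c) = {}"
| "fv (Lam x t s) = fv s - {(x, t)}"
| "fv (Pr s r) = fv s \<union> fv r"
| "fv (App s r) = fv s \<union> fv r"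
| "fv (Br s) = fv s"

definition closed_trm :: "trm \<Rightarrow> bool" where
  "closed_trm t \<longleftrightarrow> fv t = {}"

inductive has_type :: "var set \<Rightarrow> trm \<Rightarrow> ty \<Rightarrow> bool" where
  tVar: "\<lbrakk>finite G; (x, t) \<notin> G\<rbrakk> \<Longrightarrow> has_type (insert (x, t) G) (V x t) t"
| tConst: "finite G \<Longrightarrow> has_type G (C c) (ctype c)"
| tLam: "has_type (G \<union> {(x, t)}) s r \<Longrightarrow> has_type G (Lam x t s) (Fun t r)"
| tApp: "\<lbrakk>has_type G1 s (Fun t r); has_type G2 u t; G1 \<inter> G2 = {}\<rbrakk> \<Longrightarrow> has_type (G1 \<union> G2) (App s u) r"
| tPair: "\<lbrakk>has_type G s t; has_type G u r\<rbrakk> \<Longrightarrow> has_type G (Pr s u) (Prod t r)"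
| tProj1: "has_type G s (Prod t r) \<Longrightarrow> has_type G (App s (C TT)) t"
| tProj0: "has_type G s (Prod t r) \<Longrightarrow> has_type G (App s (C FF)) r"
| tBoolE: "\<lbrakk>has_type G1 s Bool; has_type G2 u t; has_type G2 w t; G1 \<inter> G2 = {}\<rbrakk>
            \<Longrightarrow> has_type (G1 \<union> G2) (App s (Pr u w)) t"
| tTensE: "\<lbrakk>has_type G1 s (Tens t r); has_type (G2 \<union> {(x, t), (y, r)}) u q;
             (x, t) \<notin> G2; (y, r) \<notin> G2; (x, t) \<noteq> (y, r); G1 \<inter> G2 = {}\<rbrakk>
            \<Longrightarrow> has_type (G1 \<union> G2) (App s (Lam x t (Lam y r u))) q"
| tListE: "\<lbrakk>has_type G s (Lst t); has_type {} u (Fun Dia (Fun t (Fun r r)))\<rbrakk>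
            \<Longrightarrow> has_type G (App s (Br u)) (Fun r r)"

end

theory Submission
  imports Defs
begin

text \<open>Inverting the last typing rule of \<open>t\<^sub>1 t\<^sub>2\<close> leaves only two non-obvious cases:
  in the \<open>\<otimes>\<close>-elimination the argument \<open>\<lambda>x.\<lambda>y.s\<close> is typed by two \<open>\<multimap>\<close>-introductions,
  and in the list elimination the argument \<open>{s}\<close> comes with \<open>s\<close> typed in the empty context,
  hence closed.\<close>

lemma has_type_fv_subset: "has_type G s r \<Longrightarrow> fv s \<subseteq> G"
  by (induction rule: has_type.induct) auto

lemma closed_trm_if_has_type_empty: "has_type {} s r \<Longrightarrow> closed_trm s"
  using has_type_fv_subset unfolding closed_trm_def by blast

lemma has_type_Lam_Lam:
  assumes "has_type (G \<union> {(x, t), (y, r)}) s q"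
  shows "has_type G (Lam x t (Lam y r s)) (Fun t (Fun r q))"
proof -
  have "has_type ((G \<union> {(x, t)}) \<union> {(y, r)}) s q"
    using assms by (simp add: insert_commute)
  then show ?thesis by (intro has_type.tLam)
qed

lemma has_type_C_empty: "has_type {} (C c) (ctype c)"
  by (rule has_type.tConst) simp

theorem lemma2p7:
  assumes "has_type G (App t1 t2) t"
  shows "(\<exists>t2'. t2 = Br t2' \<and> closed_trm t2') \<or>
         (\<exists>t' t'' G1 G2. G1 \<inter> G2 = {} \<and> has_type G1 t1 t' \<and> has_type G2 t2 t'')"
  using assms
proof (cases rule: has_type.cases)
  case tApp
  then show ?thesis by blast
next
  case tProj1
  then show ?thesis using has_type_C_empty[of TT] by auto
next
  case tProj0
  then show ?thesis using has_type_C_empty[of FF] by auto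
next
  case tBoolE
  then show ?thesis by (blast intro: has_type.tPair)
next
  case tTensE
  then show ?thesis by (blast dest: has_type_Lam_Lam)
next
  case tListE
  then show ?thesis by (blast dest: closed_trm_if_has_type_empty)
qed

end
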